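(* Let $\Omega=\{z\in\mathbb{C}: \Im z\ge 0,\ |z|\ge 1\}$ and suppose $f$ is analytic in a neighborhood of $\Omega$ and there are constants $\rho_0, C_0$ such that $|f(z)|\le C_0\exp(C_0|z|^{\rho_0})$ for all $z\in\Omega$. Suppose there are constants $C_1$ and $\rho>0$ such that for all $x>1$, $\left|\int_1^x \frac{f'(t)}{f(t)}\,dt\right|\le C_1|x|^\rho$, and for all $x<-1$, $\left|\int_x^{-1}\frac{f'(t)}{f(t)}\,dt\right|\le C_1|x|^\rho$. If in addition $f$ does not vanish in $\Omega$, then there is a constant $C_3$ such that $|f(z)|\le C_3\exp(C_3|z|^\rho)$ for all $z\in\Omega$. *)

theory Defs
  imports "HOL-Analysis.Analysis"
begin

definition Omega :: "complex set" where
  "Omega = {z. Im z \<ge> 0 \<and> norm z \<ge> 1}"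

end

theory Submission
  imports Defs "HOL-Complex_Analysis.Complex_Analysis" "HOL-Real_Asymp.Real_Asymp"
begin

text \<open>
  The substitution \<open>z = exp w\<close> maps the half-strip \<open>0 \<le> Re w, 0 \<le> Im w \<le> \<pi>\<close> onto \<open>\<Omega>\<close>.
  As \<open>f\<close> has no zeros there, \<open>f (exp w) = f 1 * exp (G w)\<close> with \<open>G\<close> holomorphic and
  \<open>G' w = exp w * f' (exp w) / f (exp w)\<close>; hence on the two horizontal sides of the half-strip
  \<open>G\<close> is an integral of \<open>f' / f\<close> along the real axis, and \<open>|G w| = O(exp (\<rho> Re w))\<close> there.
  The growth of \<open>f\<close> only bounds \<open>Re G\<close>, by \<open>O(exp (a Re w))\<close>. A Borel-Caratheodory argument on
  rectangles of size \<open>4 \<times> \<pi>\<close> upgrades this to \<open>|G w| = O(exp (b Re w))\<close>, far below the critical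
  growth \<open>exp (exp (Re w))\<close> for the Phragmen-Lindelof principle in a strip of width \<open>\<pi>\<close>. That
  principle, applied to \<open>G w * exp (- \<rho> w)\<close>, gives \<open>|G w| = O(exp (\<rho> Re w))\<close> on the whole
  half-strip, i.e. \<open>|f z| \<le> C exp (C |z| powr \<rho>)\<close>.
\<close>

definition half_strip :: "complex set" where
  "half_strip = {w. 0 \<le> Re w \<and> 0 \<le> Im w \<and> Im w \<le> pi}"

lemma convex_half_strip: "convex half_strip"
proof -
  have "half_strip = {w. Re w \<ge> 0} \<inter> {w. Im w \<ge> 0} \<inter> {w. Im w \<le> pi}"
    by (auto simp: half_strip_def)
  show ?thesis
    unfolding \<open>half_strip = _\<close>
    by (intro convex_Int convex_halfspace_Re_ge convex_halfspace_Im_ge convex_halfspace_Im_le)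
qed

lemma exp_image_half_strip: "exp ` half_strip = Omega"
proof
  show "exp ` half_strip \<subseteq> Omega"
  proof
    fix z assume "z \<in> exp ` half_strip"
    then obtain w where w: "w \<in> half_strip" "z = exp w" by blast
    have "sin (Im w) \<ge> 0"
      using w(1) by (intro sin_ge_zero) (auto simp: half_strip_def)
    then show "z \<in> Omega"
      using w by (auto simp: Omega_def half_strip_def Im_exp)
  qed
  show "Omega \<subseteq> exp ` half_strip"
  proof
    fix z assume z: "z \<in> Omega"
    then have "z \<noteq> 0" by (auto simp: Omega_def)
    then have "Ln z \<in> half_strip" "exp (Ln z) = z"
      using z Im_Ln_pos_le by (auto simp: Omega_def half_strip_def)
    then show "z \<in> exp ` half_strip" by (metis imageI)
  qed
qed

text \<open>
  Borel-Caratheodory: the Cayley-type map \<open>g \<mapsto> g / (2M - g)\<close> sends the half-plane \<open>Re g \<le> M\<close>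
  into the unit disc, and a bound on its value away from the circle bounds \<open>|g|\<close>.
\<close>

lemma Cayley_norm_le_1:
  fixes g :: complex
  assumes "Re g \<le> M" "0 < M"
  shows "norm (g / (2 * of_real M - g)) \<le> 1"
proof -
  have "(2 * M - Re g)\<^sup>2 - (Re g)\<^sup>2 = 4 * M * (M - Re g)"
    by (simp add: power2_eq_square algebra_simps)
  moreover have "0 \<le> 4 * M * (M - Re g)"
    using assms by simp
  ultimately have "(Re g)\<^sup>2 + (Im g)\<^sup>2 \<le> (2 * M - Re g)\<^sup>2 + (Im g)\<^sup>2"
    by linarith
  then have "(norm g)\<^sup>2 \<le> (norm (2 * of_real M - g))\<^sup>2"
    by (simp add: cmod_power2)
  then have "norm g \<le> norm (2 * of_real M - g)"
    by (rule power2_le_imp_le) simp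
  then show ?thesis
    by (simp add: norm_divide divide_le_eq_1)
qed

lemma Cayley_norm_le_fifth:
  fixes g :: complex
  assumes "norm g \<le> M / 3" "0 < M"
  shows "norm (g / (2 * of_real M - g)) \<le> 1 / 5"
proof -
  have "2 * M - norm g \<le> norm (2 * of_real M - g)"
    using norm_triangle_ineq2[of "2 * of_real M" g] assms(2) by (simp add: norm_mult)
  then have "5 * M / 3 \<le> norm (2 * of_real M - g)"
    using assms(1) by linarith
  then have "norm g / norm (2 * of_real M - g) \<le> (M / 3) / (5 * M / 3)"
    using assms by (intro frac_le) auto
  then show ?thesis
    using assms(2) by (simp add: norm_divide)
qed

lemma norm_le_of_Cayley_norm_le:
  fixes g :: complex
  assumes "norm (g / (2 * of_real M - g)) \<le> 4 / 5" "Re g \<le> M" "0 < M"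
  shows "norm g \<le> 8 * M"
proof -
  define \<phi> where "\<phi> = g / (2 * of_real M - g)"
  have "Re (2 * of_real M - g) > 0" using assms(2,3) by simp
  then have "2 * of_real M - g \<noteq> 0" by force
  then have "g * (1 + \<phi>) = 2 * of_real M * \<phi>"
    by (simp add: \<phi>_def field_simps)
  then have "norm g * norm (1 + \<phi>) = norm (2 * of_real M * \<phi>)"
    by (metis norm_mult)
  also have "\<dots> = 2 * M * norm \<phi>"
    using assms(3) by (simp add: norm_mult)
  also have "\<dots> \<le> 2 * M * (4 / 5)"
    using assms(1,3) by (simp add: \<phi>_def)
  finally have "norm g * norm (1 + \<phi>) \<le> 8 * M / 5" by simp
  moreover have "norm g * (1 / 5) \<le> norm g * norm (1 + \<phi>)"
    using norm_triangle_ineq2[of 1 "- \<phi>"] assms(1) by (intro mult_left_mono) (auto simp: \<phi>_def)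
  ultimately show ?thesis by simp
qed

text \<open>
  A Gaussian in the direction of \<open>Re w\<close>: multiplying by it suppresses the vertical sides of the
  rectangle \<open>[x - 2, x + 2] \<times> [0, \<pi>]\<close> in the maximum modulus argument below.
\<close>

definition gauss_weight :: "real \<Rightarrow> complex \<Rightarrow> complex" where
  "gauss_weight x w = exp ((1 - (w - Complex x (pi / 2))\<^sup>2) / 4)"

lemma norm_gauss_weight:
  "norm (gauss_weight x w) = exp ((1 - (Re w - x)\<^sup>2 + (Im w - pi / 2)\<^sup>2) / 4)"
  by (simp add: gauss_weight_def norm_exp_eq_Re power2_eq_square algebra_simps)

lemma square_sub_pi_half_le_3:
  assumes "0 \<le> y" "y \<le> pi"
  shows "(y - pi / 2)\<^sup>2 \<le> 3"
proof -
  have "\<bar>y - pi / 2\<bar> \<le> pi / 2"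
    using assms unfolding abs_le_iff by linarith
  then have "\<bar>y - pi / 2\<bar>\<^sup>2 \<le> (pi / 2)\<^sup>2"
    by (intro power_mono) auto
  also have "\<dots> \<le> 3"
  proof -
    have "pi \<le> 3.2" using pi_approx by simp
    then have "pi * pi \<le> 3.2 * 3.2" by (intro mult_mono) auto
    then show ?thesis by (simp add: power2_eq_square)
  qed
  finally show ?thesis by simp
qed

lemma norm_gauss_weight_le_1:
  assumes "\<bar>Re w - x\<bar> = 2" "0 \<le> Im w" "Im w \<le> pi"
  shows "norm (gauss_weight x w) \<le> 1"
proof -
  have "(Re w - x)\<^sup>2 = 4"
    using power2_abs[of "Re w - x"] assms(1) by simp
  then show ?thesis
    using square_sub_pi_half_le_3[OF assms(2,3)] by (simp add: norm_gauss_weight)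
qed

lemma norm_gauss_weight_le_3:
  assumes "0 \<le> Im w" "Im w \<le> pi"
  shows "norm (gauss_weight x w) \<le> 3"
proof -
  have quarter: "(1 - A + B) / 4 \<le> 1" if "0 \<le> A" "B \<le> 3" for A B :: real
    using that by simp
  have "norm (gauss_weight x w) \<le> exp 1"
    unfolding norm_gauss_weight exp_le_cancel_iff
    by (rule quarter[OF zero_le_power2 square_sub_pi_half_le_3[OF assms]])
  also have "\<dots> \<le> 3"
    using exp_le by simp
  finally show ?thesis .
qed

lemma norm_gauss_weight_midline_ge:
  assumes "Re w = x"
  shows "5 / 4 \<le> norm (gauss_weight x w)"
proof -
  have "1 + 1 / 4 \<le> exp (1 / 4 :: real)"
    by (rule exp_ge_add_one_self)
  also have "\<dots> \<le> norm (gauss_weight x w)"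
    using assms by (simp add: norm_gauss_weight)
  finally show ?thesis by simp
qed

lemma rectangle_midline_bound:
  fixes G :: "complex \<Rightarrow> complex" and M x :: real
  defines "R \<equiv> cbox (Complex (x - 2) 0) (Complex (x + 2) pi)"
  assumes contG: "continuous_on R G"
    and holG: "G holomorphic_on interior R"
    and M: "0 < M"
    and Re_le: "\<And>w. w \<in> R \<Longrightarrow> Re (G w) \<le> M"
    and sides: "\<And>w. w \<in> R \<Longrightarrow> Im w = 0 \<or> Im w = pi \<Longrightarrow> norm (G w) \<le> M / 3"
    and z: "z \<in> R" "Re z = x"
  shows "norm (G z) \<le> 8 * M"
proof -
  define \<phi> where "\<phi> w = G w / (2 * of_real M - G w)" for w
  have nonzero: "2 * of_real M - G w \<noteq> 0" if "w \<in> R" for w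
    using Re_le[OF that] M by (auto simp: complex_eq_iff)
  have frontier_bound: "norm (\<phi> w * gauss_weight x w) \<le> 1" if "w \<in> frontier R" for w
  proof -
    have wR: "w \<in> R" and "w \<notin> box (Complex (x - 2) 0) (Complex (x + 2) pi)"
      using that by (auto simp: R_def frontier_cbox)
    then consider "\<bar>Re w - x\<bar> = 2" | "Im w = 0 \<or> Im w = pi"
      by (fastforce simp: R_def box_complex_eq cbox_complex_eq)
    then have "norm (\<phi> w) * norm (gauss_weight x w) \<le> 1"
    proof cases
      case 1
      then show ?thesis
        using Cayley_norm_le_1[OF Re_le[OF wR] M] norm_gauss_weight_le_1[OF 1] wR
        by (intro mult_le_one) (auto simp: \<phi>_def R_def cbox_complex_eq)
    next
      case 2
      have "norm (\<phi> w) * norm (gauss_weight x w) \<le> 1 / 5 * 3"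
        using Cayley_norm_le_fifth[OF sides[OF wR 2] M] norm_gauss_weight_le_3 wR
        by (intro mult_mono) (auto simp: \<phi>_def R_def cbox_complex_eq)
      then show ?thesis by simp
    qed
    then show ?thesis by (simp add: norm_mult)
  qed
  have "norm (\<phi> z * gauss_weight x z) \<le> 1"
  proof (rule maximum_modulus_frontier[OF _ _ _ frontier_bound z(1)])
    show "(\<lambda>w. \<phi> w * gauss_weight x w) holomorphic_on interior R"
      using holG nonzero interior_subset
      unfolding \<phi>_def gauss_weight_def by (intro holomorphic_intros) auto
    show "continuous_on (closure R) (\<lambda>w. \<phi> w * gauss_weight x w)"
      using contG nonzero unfolding \<phi>_def gauss_weight_def R_def closure_cbox
      by (intro continuous_intros) auto
  qed (simp add: R_def)
  then have "norm (\<phi> z) * (5 / 4) \<le> 1"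
    using mult_left_mono[OF norm_gauss_weight_midline_ge[OF z(2)] norm_ge_zero[of "\<phi> z"]]
    by (simp add: norm_mult)
  then show ?thesis
    using norm_le_of_Cayley_norm_le Re_le[OF z(1)] M by (simp add: \<phi>_def)
qed

lemma half_strip_midline_rectangle_bound:
  fixes G :: "complex \<Rightarrow> complex" and D a :: real
  assumes contG: "continuous_on half_strip G"
    and holG: "G holomorphic_on interior half_strip"
    and D: "0 \<le> D" and a: "0 \<le> a"
    and Re_le: "\<And>w. w \<in> half_strip \<Longrightarrow> Re (G w) \<le> D * exp (a * Re w)"
    and sides: "\<And>w. w \<in> half_strip \<Longrightarrow> Im w = 0 \<or> Im w = pi \<Longrightarrow> norm (G w) \<le> D * exp (a * Re w)"
    and w: "w \<in> half_strip" "2 \<le> Re w"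
  shows "norm (G w) \<le> 8 * (3 * D * exp (a * (Re w + 2)) + 1)"
proof (rule rectangle_midline_bound[where G = G and z = w])
  let ?R = "cbox (Complex (Re w - 2) 0) (Complex (Re w + 2) pi)"
  have R_sub: "?R \<subseteq> half_strip"
    using w by (auto simp: half_strip_def cbox_complex_eq)
  have exp_le: "D * exp (a * Re v) \<le> D * exp (a * (Re w + 2))" if "v \<in> ?R" for v
    using that D a by (auto simp: cbox_complex_eq intro!: mult_left_mono)
  have "0 \<le> D * exp (a * (Re w + 2))"
    using D by simp
  show "continuous_on ?R G"
    by (rule continuous_on_subset[OF contG R_sub])
  show "G holomorphic_on interior ?R"
    using R_sub by (intro holomorphic_on_subset[OF holG] interior_mono)
  show "0 < 3 * D * exp (a * (Re w + 2)) + 1"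
    using D by (simp add: add_nonneg_pos)
  show "Re (G v) \<le> 3 * D * exp (a * (Re w + 2)) + 1" if "v \<in> ?R" for v
    using Re_le[OF subsetD[OF R_sub that]] exp_le[OF that] \<open>0 \<le> D * exp (a * (Re w + 2))\<close>
    by linarith
  show "norm (G v) \<le> (3 * D * exp (a * (Re w + 2)) + 1) / 3"
    if "v \<in> ?R" "Im v = 0 \<or> Im v = pi" for v
  proof -
    have "norm (G v) \<le> D * exp (a * (Re w + 2))"
      using sides[OF subsetD[OF R_sub that(1)] that(2)] exp_le[OF that(1)] by linarith
    also have "\<dots> \<le> (3 * D * exp (a * (Re w + 2)) + 1) / 3"
      by (simp add: field_simps)
    finally show ?thesis .
  qed
  show "w \<in> ?R"
    using w by (auto simp: half_strip_def cbox_complex_eq)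
qed simp

lemma half_strip_norm_le_of_Re_le:
  fixes G :: "complex \<Rightarrow> complex" and D a :: real
  assumes contG: "continuous_on half_strip G"
    and holG: "G holomorphic_on interior half_strip"
    and D: "0 \<le> D" and a: "0 \<le> a"
    and Re_le: "\<And>w. w \<in> half_strip \<Longrightarrow> Re (G w) \<le> D * exp (a * Re w)"
    and sides: "\<And>w. w \<in> half_strip \<Longrightarrow> Im w = 0 \<or> Im w = pi \<Longrightarrow> norm (G w) \<le> D * exp (a * Re w)"
  shows "\<exists>D'. \<forall>w\<in>half_strip. norm (G w) \<le> D' * exp (a * Re w)"
proof -
  have "cbox 0 (Complex 2 pi) \<subseteq> half_strip"
    by (auto simp: half_strip_def cbox_complex_eq)
  then obtain B where "0 \<le> B" and B: "\<And>w. w \<in> cbox 0 (Complex 2 pi) \<Longrightarrow> norm (G w) \<le> B"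
    using continuous_on_compact_bound[OF compact_cbox continuous_on_subset[OF contG]] by metis
  define D' where "D' = B + 24 * D * exp (2 * a) + 8"
  have "norm (G w) \<le> D' * exp (a * Re w)" if w: "w \<in> half_strip" for w
  proof -
    have "1 \<le> exp (a * Re w)"
      using w a by (simp add: half_strip_def)
    have "norm (G w) \<le> B + (24 * D * exp (2 * a) + 8) * exp (a * Re w)"
    proof (cases "Re w \<le> 2")
      case True
      then have "norm (G w) \<le> B"
        using w by (intro B) (auto simp: half_strip_def cbox_complex_eq)
      then show ?thesis
        using D by (simp add: add_increasing2)
    next
      case False
      then have "2 \<le> Re w" by simp
      have "norm (G w) \<le> 8 * (3 * D * exp (a * (Re w + 2)) + 1)"
        using Re_le sides w \<open>2 \<le> Re w\<close> by (rule half_strip_midline_rectangle_bound[OF contG holG D a])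
      also have "\<dots> = 24 * D * exp (2 * a) * exp (a * Re w) + 8"
        by (simp add: distrib_left exp_add mult_ac)
      also have "\<dots> \<le> B + (24 * D * exp (2 * a) + 8) * exp (a * Re w)"
        using \<open>0 \<le> B\<close> by (simp add: algebra_simps) (use \<open>1 \<le> exp (a * Re w)\<close> in linarith)
      finally show ?thesis .
    qed
    also have "\<dots> \<le> D' * exp (a * Re w)"
      using \<open>1 \<le> exp (a * Re w)\<close> \<open>0 \<le> B\<close> mult_left_mono[OF \<open>1 \<le> exp (a * Re w)\<close> \<open>0 \<le> B\<close>]
      by (simp add: D'_def algebra_simps)
    finally show ?thesis .
  qed
  then show ?thesis by blast
qed

text \<open>
  The damping factor of the Phragmen-Lindelof argument: on the half-strip its modulus is
  \<open>exp (- \<epsilon> exp (Re w / 2) cos ((Im w - \<pi> / 2) / 2))\<close>, and the cosine stays above \<open>1 / 2\<close>.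
\<close>

definition strip_damping :: "real \<Rightarrow> complex \<Rightarrow> complex" where
  "strip_damping \<epsilon> w = exp (- of_real \<epsilon> * exp ((w - \<i> * pi / 2) / 2))"

lemma norm_strip_damping_le:
  assumes "w \<in> half_strip" "0 \<le> \<epsilon>"
  shows "norm (strip_damping \<epsilon> w) \<le> exp (- (\<epsilon> / 2) * exp (Re w / 2))"
proof -
  have "\<bar>(Im w - pi / 2) / 2\<bar> \<le> pi / 4"
    using assms(1) by (auto simp: half_strip_def abs_le_iff field_simps)
  then have "cos (pi / 4) \<le> cos \<bar>(Im w - pi / 2) / 2\<bar>"
    by (rule cos_monotone_0_pi_le[OF abs_ge_zero]) (use pi_gt_zero in linarith)
  moreover have "1 / 2 \<le> cos (pi / 4)"
    by (simp add: cos_45 real_le_rsqrt)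
  ultimately have "1 / 2 \<le> cos ((Im w - pi / 2) / 2)"
    unfolding cos_abs_real by linarith
  then have "exp (Re w / 2) / 2 \<le> Re (exp ((w - \<i> * pi / 2) / 2))"
    by (simp add: Re_exp mult_left_mono)
  then have "\<epsilon> * (exp (Re w / 2) / 2) \<le> \<epsilon> * Re (exp ((w - \<i> * pi / 2) / 2))"
    using assms(2) by (rule mult_left_mono)
  then show ?thesis
    by (simp add: strip_damping_def)
qed

lemma norm_strip_damping_ge:
  assumes "0 \<le> \<epsilon>"
  shows "exp (- \<epsilon> * exp (Re w / 2)) \<le> norm (strip_damping \<epsilon> w)"
proof -
  have "Re (exp ((w - \<i> * pi / 2) / 2)) \<le> exp (Re w / 2)"
    using complex_Re_le_cmod[of "exp ((w - \<i> * pi / 2) / 2)"] by simp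
  then show ?thesis
    using assms by (simp add: strip_damping_def mult_left_mono)
qed

lemma eventually_mult_exp_sub_exp_half_less:
  fixes a c D B :: real
  assumes "0 < c" "0 < B"
  shows "eventually (\<lambda>X. D * exp (a * X - c * exp (X / 2)) < B) at_top"
proof -
  have "((\<lambda>X. exp (a * X - c * exp (X / 2))) \<longlongrightarrow> 0) at_top"
    using assms(1) by real_asymp
  then show ?thesis
    using assms(2) by (intro order_tendstoD) (auto intro: tendsto_mult_right_zero)
qed

lemma damped_bound_on_rectangle_frontier:
  fixes \<Psi> :: "complex \<Rightarrow> complex" and D a B \<epsilon> X :: real
  assumes growth: "\<And>w. w \<in> half_strip \<Longrightarrow> norm (\<Psi> w) \<le> D * exp (a * Re w)"
    and boundary: "\<And>w. w \<in> half_strip \<Longrightarrow> Re w = 0 \<or> Im w = 0 \<or> Im w = pi \<Longrightarrow> norm (\<Psi> w) \<le> B"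
    and "0 < B" "0 < \<epsilon>" and X: "D * exp (a * X - \<epsilon> / 2 * exp (X / 2)) < B"
    and w: "w \<in> frontier (cbox 0 (Complex X pi))"
  shows "norm (\<Psi> w) * norm (strip_damping \<epsilon> w) \<le> B"
proof -
  have "w \<in> cbox 0 (Complex X pi)" "w \<notin> box 0 (Complex X pi)"
    using w by (auto simp: frontier_cbox)
  then have w_in: "w \<in> half_strip" and "Re w \<le> X" "w \<notin> box 0 (Complex X pi)"
    by (auto simp: half_strip_def cbox_complex_eq)
  then consider "Re w = X" | "Re w = 0 \<or> Im w = 0 \<or> Im w = pi"
    by (auto simp: box_complex_eq half_strip_def)
  then show ?thesis
  proof cases
    case 1
    have "norm (\<Psi> w) * norm (strip_damping \<epsilon> w) \<le> D * exp (a * X) * exp (- (\<epsilon> / 2) * exp (X / 2))"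
      using growth[OF w_in] norm_strip_damping_le[OF w_in] 1 \<open>0 < \<epsilon>\<close>
      by (intro mult_mono) (auto intro: order_trans[OF norm_ge_zero])
    also have "\<dots> = D * exp (a * X - \<epsilon> / 2 * exp (X / 2))"
      by (simp add: mult.assoc flip: exp_add)
    finally show ?thesis
      using X by linarith
  next
    case 2
    have "norm (strip_damping \<epsilon> w) \<le> exp (- (\<epsilon> / 2) * exp (Re w / 2))"
      using norm_strip_damping_le[OF w_in] \<open>0 < \<epsilon>\<close> by simp
    also have "\<dots> \<le> 1"
      using \<open>0 < \<epsilon>\<close> by simp
    finally have "norm (\<Psi> w) * norm (strip_damping \<epsilon> w) \<le> B * 1"
      using boundary[OF w_in 2] \<open>0 < B\<close> by (intro mult_mono) auto
    then show ?thesis by simp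
  qed
qed

lemma phragmen_lindelof_half_strip_damped:
  fixes \<Psi> :: "complex \<Rightarrow> complex" and D a B \<epsilon> :: real
  assumes cont: "continuous_on half_strip \<Psi>"
    and hol: "\<Psi> holomorphic_on interior half_strip"
    and growth: "\<And>w. w \<in> half_strip \<Longrightarrow> norm (\<Psi> w) \<le> D * exp (a * Re w)"
    and boundary: "\<And>w. w \<in> half_strip \<Longrightarrow> Re w = 0 \<or> Im w = 0 \<or> Im w = pi \<Longrightarrow> norm (\<Psi> w) \<le> B"
    and "0 < B" "0 < \<epsilon>" and z: "z \<in> half_strip"
  shows "norm (\<Psi> z * strip_damping \<epsilon> z) \<le> B"
proof -
  have "eventually (\<lambda>X. Re z < X \<and> D * exp (a * X - \<epsilon> / 2 * exp (X / 2)) < B) at_top"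
    using \<open>0 < B\<close> \<open>0 < \<epsilon>\<close>
    by (intro eventually_conj eventually_gt_at_top eventually_mult_exp_sub_exp_half_less) auto
  then obtain X where X: "Re z < X" "D * exp (a * X - \<epsilon> / 2 * exp (X / 2)) < B"
    using eventually_happens'[OF trivial_limit_at_top_linorder] by blast
  let ?R = "cbox 0 (Complex X pi)"
  have R_sub: "?R \<subseteq> half_strip"
    by (auto simp: half_strip_def cbox_complex_eq)
  show ?thesis
  proof (rule maximum_modulus_frontier[where S = ?R and f = "\<lambda>w. \<Psi> w * strip_damping \<epsilon> w"])
    show "(\<lambda>w. \<Psi> w * strip_damping \<epsilon> w) holomorphic_on interior ?R"
      using R_sub unfolding strip_damping_def
      by (intro holomorphic_intros holomorphic_on_subset[OF hol] interior_mono) auto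
    show "continuous_on (closure ?R) (\<lambda>w. \<Psi> w * strip_damping \<epsilon> w)"
      using R_sub unfolding strip_damping_def closure_cbox
      by (intro continuous_intros continuous_on_subset[OF cont]) auto
    show "norm (\<Psi> w * strip_damping \<epsilon> w) \<le> B" if "w \<in> frontier ?R" for w
      using damped_bound_on_rectangle_frontier[OF growth boundary \<open>0 < B\<close> \<open>0 < \<epsilon>\<close> X(2) that]
      by (simp add: norm_mult)
    show "z \<in> ?R"
      using z X(1) by (auto simp: half_strip_def cbox_complex_eq)
  qed (simp add: bounded_cbox)
qed

lemma phragmen_lindelof_half_strip:
  fixes \<Psi> :: "complex \<Rightarrow> complex" and D a B :: real
  assumes cont: "continuous_on half_strip \<Psi>"
    and hol: "\<Psi> holomorphic_on interior half_strip"
    and growth: "\<And>w. w \<in> half_strip \<Longrightarrow> norm (\<Psi> w) \<le> D * exp (a * Re w)"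
    and boundary: "\<And>w. w \<in> half_strip \<Longrightarrow> Re w = 0 \<or> Im w = 0 \<or> Im w = pi \<Longrightarrow> norm (\<Psi> w) \<le> B"
    and "0 < B" and z: "z \<in> half_strip"
  shows "norm (\<Psi> z) \<le> B"
proof -
  have "norm (\<Psi> z) \<le> B * exp (\<epsilon> * exp (Re z / 2))" if "0 < \<epsilon>" for \<epsilon>
  proof -
    have "norm (\<Psi> z) * exp (- \<epsilon> * exp (Re z / 2)) \<le> norm (\<Psi> z) * norm (strip_damping \<epsilon> z)"
      using norm_strip_damping_ge that by (intro mult_left_mono) auto
    also have "\<dots> \<le> B"
      using phragmen_lindelof_half_strip_damped[OF cont hol growth boundary \<open>0 < B\<close> that z]
      by (simp add: norm_mult)
    finally show ?thesis
      by (simp add: exp_minus field_simps)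
  qed
  then have "eventually (\<lambda>\<epsilon>. norm (\<Psi> z) \<le> B * exp (\<epsilon> * exp (Re z / 2))) (at_right 0)"
    using eventually_at_right_less[of "0::real"] by (auto elim: eventually_mono)
  moreover have "((\<lambda>\<epsilon>. B * exp (\<epsilon> * exp (Re z / 2))) \<longlongrightarrow> B * exp (0 * exp (Re z / 2))) (at_right 0)"
    by (intro tendsto_intros)
  ultimately show ?thesis
    using tendsto_lowerbound by fastforce
qed

lemma half_strip_norm_le_exp_of_sides:
  fixes G :: "complex \<Rightarrow> complex" and D K a \<rho> :: real
  assumes cont: "continuous_on half_strip G"
    and hol: "G holomorphic_on interior half_strip"
    and "0 \<le> \<rho>"
    and growth: "\<And>w. w \<in> half_strip \<Longrightarrow> norm (G w) \<le> D * exp (a * Re w)"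
    and sides: "\<And>w. w \<in> half_strip \<Longrightarrow> Im w = 0 \<or> Im w = pi \<Longrightarrow> norm (G w) \<le> K * exp (\<rho> * Re w)"
  shows "\<exists>B. \<forall>w\<in>half_strip. norm (G w) \<le> B * exp (\<rho> * Re w)"
proof -
  have "cbox 0 (Complex 0 pi) \<subseteq> half_strip"
    by (auto simp: half_strip_def cbox_complex_eq)
  then obtain B0 where "0 \<le> B0" and B0: "\<And>w. w \<in> cbox 0 (Complex 0 pi) \<Longrightarrow> norm (G w) \<le> B0"
    using continuous_on_compact_bound[OF compact_cbox continuous_on_subset[OF cont]] by metis
  define B where "B = B0 + max K 0 + 1"
  define \<Psi> where "\<Psi> w = G w * exp (- of_real \<rho> * w)" for w
  have norm_\<Psi>: "norm (\<Psi> w) = norm (G w) * exp (- \<rho> * Re w)" for w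
    by (simp add: \<Psi>_def norm_mult)
  have \<Psi>_le: "norm (\<Psi> w) \<le> norm (G w)" if "w \<in> half_strip" for w
    unfolding norm_\<Psi> using that \<open>0 \<le> \<rho>\<close> by (intro mult_left_le) (auto simp: half_strip_def)
  have "norm (\<Psi> w) \<le> B" if w: "w \<in> half_strip" for w
  proof (rule phragmen_lindelof_half_strip[OF _ _ _ _ _ w])
    show "continuous_on half_strip \<Psi>"
      unfolding \<Psi>_def by (intro continuous_intros cont)
    show "\<Psi> holomorphic_on interior half_strip"
      unfolding \<Psi>_def by (intro holomorphic_intros hol)
    show "norm (\<Psi> v) \<le> D * exp (a * Re v)" if "v \<in> half_strip" for v
      using \<Psi>_le[OF that] growth[OF that] by linarith
    show "norm (\<Psi> v) \<le> B" if v: "v \<in> half_strip" "Re v = 0 \<or> Im v = 0 \<or> Im v = pi" for v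
    proof (cases "Re v = 0")
      case True
      then have "v \<in> cbox 0 (Complex 0 pi)"
        using v(1) by (auto simp: half_strip_def cbox_complex_eq)
      then show ?thesis
        using B0 \<Psi>_le[OF v(1)] by (force simp: B_def)
    next
      case False
      then have "norm (\<Psi> v) \<le> K * exp (\<rho> * Re v) * exp (- \<rho> * Re v)"
        unfolding norm_\<Psi> using sides[OF v(1)] v(2) by (intro mult_right_mono) auto
      also have "\<dots> = K"
        by (simp add: exp_minus)
      finally show ?thesis
        using \<open>0 \<le> B0\<close> by (simp add: B_def)
    qed
    show "0 < B"
      using \<open>0 \<le> B0\<close> by (simp add: B_def add_nonneg_pos)
  qed
  then have "norm (G w) \<le> B * exp (\<rho> * Re w)" if "w \<in> half_strip" for w
    using that by (simp add: norm_\<Psi> exp_minus field_simps)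
  then show ?thesis by blast
qed

lemma half_strip_exponential_type:
  fixes G :: "complex \<Rightarrow> complex" and D K a \<rho> :: real
  assumes cont: "continuous_on half_strip G"
    and hol: "G holomorphic_on interior half_strip"
    and a: "0 \<le> a" and \<rho>: "0 \<le> \<rho>"
    and Re_le: "\<And>w. w \<in> half_strip \<Longrightarrow> Re (G w) \<le> D * exp (a * Re w)"
    and sides: "\<And>w. w \<in> half_strip \<Longrightarrow> Im w = 0 \<or> Im w = pi \<Longrightarrow> norm (G w) \<le> K * exp (\<rho> * Re w)"
  shows "\<exists>B. \<forall>w\<in>half_strip. norm (G w) \<le> B * exp (\<rho> * Re w)"
proof -
  define b where "b = max a \<rho>"
  define D' where "D' = max 0 (max D K)"
  have "D \<le> D'" "K \<le> D'" "a \<le> b" "\<rho> \<le> b"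
    by (auto simp: D'_def b_def)
  have weaken: "C * exp (c * Re w) \<le> D' * exp (b * Re w)"
    if "w \<in> half_strip" "C \<le> D'" "c \<le> b" for C c w
  proof -
    have "C * exp (c * Re w) \<le> D' * exp (c * Re w)"
      using that(2) by (rule mult_right_mono) simp
    also have "\<dots> \<le> D' * exp (b * Re w)"
      using that by (intro mult_left_mono) (auto simp: D'_def half_strip_def mult_right_mono)
    finally show ?thesis .
  qed
  have "\<exists>D''. \<forall>w\<in>half_strip. norm (G w) \<le> D'' * exp (b * Re w)"
  proof (rule half_strip_norm_le_of_Re_le[OF cont hol])
    show "0 \<le> D'" "0 \<le> b"
      using a by (auto simp: D'_def b_def)
    show "Re (G w) \<le> D' * exp (b * Re w)" if "w \<in> half_strip" for w
      using Re_le[OF that] weaken[OF that \<open>D \<le> D'\<close> \<open>a \<le> b\<close>] by linarith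
    show "norm (G w) \<le> D' * exp (b * Re w)" if "w \<in> half_strip" "Im w = 0 \<or> Im w = pi" for w
      using sides[OF that] weaken[OF that(1) \<open>K \<le> D'\<close> \<open>\<rho> \<le> b\<close>] by linarith
  qed
  then obtain D'' where "\<And>w. w \<in> half_strip \<Longrightarrow> norm (G w) \<le> D'' * exp (b * Re w)"
    by blast
  then show ?thesis
    using half_strip_norm_le_exp_of_sides[OF cont hol \<rho> _ sides] by blast
qed

lemma holomorphic_on_interior_of_has_field_derivative:
  assumes "\<And>w. w \<in> S \<Longrightarrow> (G has_field_derivative G' w) (at w within S)"
  shows "G holomorphic_on interior S"
  unfolding holomorphic_on_def field_differentiable_def
proof
  fix w assume w: "w \<in> interior S"
  then have "(G has_field_derivative G' w) (at w)"
    using assms[of w] interior_subset at_within_interior[OF w] by auto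
  then show "\<exists>G'. (G has_field_derivative G') (at w within interior S)"
    using has_field_derivative_at_within by blast
qed

lemma holomorphic_log_deriv_primitive:
  fixes g :: "complex \<Rightarrow> complex"
  assumes "convex S" and V: "open V" "S \<subseteq> V" and hol: "g holomorphic_on V"
    and nonzero: "\<And>w. w \<in> S \<Longrightarrow> g w \<noteq> 0"
  obtains L where "\<And>w. w \<in> S \<Longrightarrow> (L has_field_derivative deriv g w / g w) (at w within S)"
proof -
  define V' where "V' = V \<inter> g -` (- {0})"
  have "open V'"
    unfolding V'_def using holomorphic_on_imp_continuous_on[OF hol] V(1)
    by (rule continuous_open_preimage) auto
  have "S \<subseteq> V'" "V' \<subseteq> V"
    using V nonzero by (auto simp: V'_def)
  have "deriv g holomorphic_on V'"
    by (rule holomorphic_on_subset[OF holomorphic_deriv[OF hol V(1)] \<open>V' \<subseteq> V\<close>])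
  moreover have "g holomorphic_on V'"
    by (rule holomorphic_on_subset[OF hol \<open>V' \<subseteq> V\<close>])
  ultimately have hol': "(\<lambda>w. deriv g w / g w) holomorphic_on V'"
    by (rule holomorphic_on_divide) (simp add: V'_def)
  have "continuous_on S (\<lambda>w. deriv g w / g w)"
    by (rule continuous_on_subset[OF holomorphic_on_imp_continuous_on[OF hol'] \<open>S \<subseteq> V'\<close>])
  moreover have "(\<lambda>w. deriv g w / g w) field_differentiable at w" if "w \<in> interior S - {}" for w
    using holomorphic_on_imp_differentiable_at[OF hol' \<open>open V'\<close>] that interior_subset \<open>S \<subseteq> V'\<close>
    by blast
  ultimately show ?thesis
    using holomorphic_convex_primitive[OF \<open>convex S\<close> finite.emptyI] that by blast
qed

lemma convex_holomorphic_log: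
  fixes g :: "complex \<Rightarrow> complex"
  assumes S: "convex S" "a \<in> S" and V: "open V" "S \<subseteq> V" and hol: "g holomorphic_on V"
    and nonzero: "\<And>w. w \<in> S \<Longrightarrow> g w \<noteq> 0"
  obtains L where "\<And>w. w \<in> S \<Longrightarrow> (L has_field_derivative deriv g w / g w) (at w within S)"
    and "L a = 0" and "\<And>w. w \<in> S \<Longrightarrow> g w = g a * exp (L w)"
proof -
  obtain L1 where L1: "\<And>w. w \<in> S \<Longrightarrow> (L1 has_field_derivative deriv g w / g w) (at w within S)"
    using holomorphic_log_deriv_primitive[OF S(1) V hol nonzero] by blast
  define L where "L w = L1 w - L1 a" for w
  have L: "(L has_field_derivative deriv g w / g w) (at w within S)" if "w \<in> S" for w
    unfolding L_def using L1[OF that] by (auto intro!: derivative_eq_intros)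
  have "L a = 0" by (simp add: L_def)
  have const: "((\<lambda>w. g w * exp (- L w)) has_field_derivative 0) (at w within S)" if w: "w \<in> S" for w
  proof -
    have "(g has_field_derivative deriv g w) (at w within S)"
      using holomorphic_derivI[OF hol V(1)] V(2) w by blast
    then have "((\<lambda>w. g w * exp (- L w)) has_field_derivative
        deriv g w * exp (- L w) + g w * (exp (- L w) * - (deriv g w / g w))) (at w within S)"
      using L[OF w] by (auto intro!: derivative_eq_intros)
    then show ?thesis
      using nonzero[OF w] by simp
  qed
  obtain c where c: "\<And>w. w \<in> S \<Longrightarrow> g w * exp (- L w) = c"
    using has_field_derivative_zero_constant[OF S(1) const] by blast
  have log: "g w = g a * exp (L w)" if "w \<in> S" for w
  proof -
    have "g w = g w * exp (- L w) * exp (L w)"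
      by (simp add: exp_minus)
    also have "\<dots> = g a * exp (L w)"
      using c[OF that] c[OF S(2)] \<open>L a = 0\<close> by simp
    finally show ?thesis .
  qed
  show ?thesis
    by (rule that[OF L \<open>L a = 0\<close> log])
qed

lemma has_integral_log_deriv_along_logarithm:
  fixes f G :: "complex \<Rightarrow> complex" and \<gamma> :: "real \<Rightarrow> complex"
  assumes G: "\<And>w. w \<in> S \<Longrightarrow> (G has_field_derivative deriv f (exp w) * exp w / f (exp w)) (at w within S)"
    and "a \<le> b"
    and \<gamma>_in: "\<And>t. t \<in> {a..b} \<Longrightarrow> \<gamma> t \<in> S"
    and exp_\<gamma>: "\<And>t. t \<in> {a..b} \<Longrightarrow> exp (\<gamma> t) = of_real t"
    and \<gamma>': "\<And>t. t \<in> {a..b} \<Longrightarrow> (\<gamma> has_vector_derivative of_real (1 / t)) (at t within {a..b})"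
  shows "((\<lambda>t. deriv f (of_real t) / f (of_real t)) has_integral G (\<gamma> b) - G (\<gamma> a)) {a..b}"
proof (rule fundamental_theorem_of_calculus[OF \<open>a \<le> b\<close>])
  fix t assume t: "t \<in> {a..b}"
  have "t \<noteq> 0"
    using exp_\<gamma>[OF t] exp_not_eq_zero by force
  have "(G has_field_derivative deriv f (exp (\<gamma> t)) * exp (\<gamma> t) / f (exp (\<gamma> t)))
      (at (\<gamma> t) within \<gamma> ` {a..b})"
    using G[OF \<gamma>_in[OF t]] by (rule DERIV_subset) (auto intro: \<gamma>_in)
  then have "((G \<circ> \<gamma>) has_vector_derivative
      of_real (1 / t) * (deriv f (exp (\<gamma> t)) * exp (\<gamma> t) / f (exp (\<gamma> t)))) (at t within {a..b})"
    by (rule field_vector_diff_chain_within[OF \<gamma>'[OF t]])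
  then show "((\<lambda>t. G (\<gamma> t)) has_vector_derivative deriv f (of_real t) / f (of_real t)) (at t within {a..b})"
    using exp_\<gamma>[OF t] \<open>t \<noteq> 0\<close> by (simp add: o_def field_simps)
qed

lemma mult_abs_exp_powr_le:
  fixes C \<rho> u :: real
  shows "C * \<bar>exp u\<bar> powr \<rho> \<le> \<bar>C\<bar> * exp (\<rho> * u)"
  by (simp add: exp_powr_real mult.commute mult_right_mono)

lemma norm_log_on_real_axis:
  fixes f G :: "complex \<Rightarrow> complex" and C1 \<rho> u :: real
  assumes G: "\<And>w. w \<in> half_strip \<Longrightarrow>
      (G has_field_derivative deriv f (exp w) * exp w / f (exp w)) (at w within half_strip)"
    and "G 0 = 0" and "0 \<le> u"
    and right: "\<And>x. 1 < x \<Longrightarrow>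
      norm (integral {1..x} (\<lambda>t. deriv f (of_real t) / f (of_real t))) \<le> C1 * \<bar>x\<bar> powr \<rho>"
  shows "norm (G (of_real u)) \<le> \<bar>C1\<bar> * exp (\<rho> * u)"
proof (cases "u = 0")
  case False
  have "((\<lambda>t. deriv f (of_real t) / f (of_real t)) has_integral
      G (of_real (ln (exp u))) - G (of_real (ln 1))) {1..exp u}"
  proof (rule has_integral_log_deriv_along_logarithm[OF G])
    fix t assume t: "t \<in> {1..exp u}"
    then show "of_real (ln t) \<in> half_strip"
      by (simp add: half_strip_def)
    show "exp (of_real (ln t)) = of_real t"
      using t by (simp add: exp_of_real)
    show "((\<lambda>t. of_real (ln t)) has_vector_derivative of_real (1 / t)) (at t within {1..exp u})"
      using t by (intro has_vector_derivative_at_within[OF has_vector_derivative_of_real] DERIV_ln_divide)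
        simp
  next
    show "1 \<le> exp u" using \<open>0 \<le> u\<close> by simp
  qed
  then have "integral {1..exp u} (\<lambda>t. deriv f (of_real t) / f (of_real t)) = G (of_real u)"
    using \<open>G 0 = 0\<close> by (simp add: integral_unique)
  then show ?thesis
    using right[of "exp u"] mult_abs_exp_powr_le[of C1 u \<rho>] \<open>0 \<le> u\<close> False by simp
qed (simp add: \<open>G 0 = 0\<close>)

lemma norm_log_increment_on_upper_side:
  fixes f G :: "complex \<Rightarrow> complex" and C1 \<rho> u :: real
  assumes G: "\<And>w. w \<in> half_strip \<Longrightarrow>
      (G has_field_derivative deriv f (exp w) * exp w / f (exp w)) (at w within half_strip)"
    and "0 \<le> u"
    and left: "\<And>x. x < -1 \<Longrightarrow>
      norm (integral {x..-1} (\<lambda>t. deriv f (of_real t) / f (of_real t))) \<le> C1 * \<bar>x\<bar> powr \<rho>"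
  shows "norm (G (\<i> * pi) - G (of_real u + \<i> * pi)) \<le> \<bar>C1\<bar> * exp (\<rho> * u)"
proof (cases "u = 0")
  case False
  let ?\<gamma> = "\<lambda>t. of_real (ln (- t)) + \<i> * pi"
  have ln_minus: "((\<lambda>t. ln (- t)) has_real_derivative 1 / t) (at t)" if "t < 0" for t
    using DERIV_chain2[OF DERIV_ln_divide[of "- t"] DERIV_minus[OF DERIV_ident]] that by simp
  have "((\<lambda>t. deriv f (of_real t) / f (of_real t)) has_integral
      G (?\<gamma> (- 1)) - G (?\<gamma> (- exp u))) {- exp u..-1}"
  proof (rule has_integral_log_deriv_along_logarithm[OF G])
    fix t assume t: "t \<in> {- exp u..-1}"
    then show "?\<gamma> t \<in> half_strip"
      by (simp add: half_strip_def)
    show "exp (?\<gamma> t) = of_real t"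
      using t by (simp add: exp_add exp_of_real)
    show "(?\<gamma> has_vector_derivative of_real (1 / t)) (at t within {- exp u..-1})"
      using t by (intro has_vector_derivative_at_within[OF has_vector_derivative_add_const[THEN iffD2]]
          has_vector_derivative_of_real ln_minus) simp
  next
    show "- exp u \<le> -1" using \<open>0 \<le> u\<close> by simp
  qed
  then have "integral {- exp u..-1} (\<lambda>t. deriv f (of_real t) / f (of_real t)) =
      G (\<i> * pi) - G (of_real u + \<i> * pi)"
    by (simp add: integral_unique)
  then show ?thesis
    using left[of "- exp u"] mult_abs_exp_powr_le[of C1 u \<rho>] \<open>0 \<le> u\<close> False by simp
qed simp

lemma half_strip_sides_bound_of_log_deriv_integrals:
  fixes f G :: "complex \<Rightarrow> complex" and C1 \<rho> :: real
  assumes G: "\<And>w. w \<in> half_strip \<Longrightarrow>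
      (G has_field_derivative deriv f (exp w) * exp w / f (exp w)) (at w within half_strip)"
    and "G 0 = 0" and "0 \<le> \<rho>"
    and right: "\<And>x. 1 < x \<Longrightarrow>
      norm (integral {1..x} (\<lambda>t. deriv f (of_real t) / f (of_real t))) \<le> C1 * \<bar>x\<bar> powr \<rho>"
    and left: "\<And>x. x < -1 \<Longrightarrow>
      norm (integral {x..-1} (\<lambda>t. deriv f (of_real t) / f (of_real t))) \<le> C1 * \<bar>x\<bar> powr \<rho>"
  shows "\<exists>K. \<forall>w\<in>half_strip. Im w = 0 \<or> Im w = pi \<longrightarrow> norm (G w) \<le> K * exp (\<rho> * Re w)"
proof -
  define K where "K = norm (G (\<i> * pi)) + \<bar>C1\<bar>"
  have "norm (G w) \<le> K * exp (\<rho> * Re w)"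
    if w: "w \<in> half_strip" "Im w = 0 \<or> Im w = pi" for w
  proof -
    have "0 \<le> Re w" and "1 \<le> exp (\<rho> * Re w)"
      using w(1) \<open>0 \<le> \<rho>\<close> by (auto simp: half_strip_def)
    from w(2) have "norm (G w) \<le> norm (G (\<i> * pi)) + \<bar>C1\<bar> * exp (\<rho> * Re w)"
    proof
      assume "Im w = 0"
      then have "w = of_real (Re w)" by (simp add: complex_eq_iff)
      then show ?thesis
        using norm_log_on_real_axis[OF G \<open>G 0 = 0\<close> \<open>0 \<le> Re w\<close> right, folded \<open>w = _\<close>]
          norm_ge_zero[of "G (\<i> * pi)"] by linarith
    next
      assume "Im w = pi"
      then have "w = of_real (Re w) + \<i> * pi" by (simp add: complex_eq_iff)
      then show ?thesis
        using norm_log_increment_on_upper_side[OF G \<open>0 \<le> Re w\<close> left, folded \<open>w = _\<close>]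
          norm_triangle_sub[of "G w" "G (\<i> * pi)"] norm_minus_commute[of "G w" "G (\<i> * pi)"]
        by linarith
    qed
    also have "\<dots> \<le> K * exp (\<rho> * Re w)"
      using \<open>1 \<le> exp (\<rho> * Re w)\<close> by (simp add: K_def distrib_right mult_le_cancel_left1)
    finally show ?thesis .
  qed
  then show ?thesis by blast
qed

lemma Re_log_le_of_growth:
  fixes f G :: "complex \<Rightarrow> complex" and C0 \<rho>0 :: real
  assumes growth: "\<forall>z\<in>Omega. norm (f z) \<le> C0 * exp (C0 * norm z powr \<rho>0)"
    and log: "\<And>w. w \<in> half_strip \<Longrightarrow> f (exp w) = f 1 * exp (G w)"
    and "f 1 \<noteq> 0"
  shows "\<exists>D. \<forall>w\<in>half_strip. Re (G w) \<le> D * exp (\<bar>\<rho>0\<bar> * Re w)"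
proof -
  have "1 \<in> Omega" by (simp add: Omega_def)
  then have "norm (f 1) \<le> C0 * exp (C0 * norm (1 :: complex) powr \<rho>0)"
    using growth by blast
  then have "0 < C0 * exp (C0 * norm (1 :: complex) powr \<rho>0)"
    using \<open>f 1 \<noteq> 0\<close> by (meson less_le_trans zero_less_norm_iff)
  then have "0 < C0" by (simp add: zero_less_mult_iff)
  define D where "D = \<bar>ln C0\<bar> + C0 + \<bar>ln (norm (f 1))\<bar>"
  have "Re (G w) \<le> D * exp (\<bar>\<rho>0\<bar> * Re w)" if w: "w \<in> half_strip" for w
  proof -
    define e where "e = exp (\<bar>\<rho>0\<bar> * Re w)"
    have "0 \<le> Re w" using w by (simp add: half_strip_def)
    then have "1 \<le> e" and exp_\<rho>0: "exp (\<rho>0 * Re w) \<le> e"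
      by (auto simp: e_def mult_right_mono)
    have "exp w \<in> Omega"
      using w exp_image_half_strip by blast
    then have "norm (f (exp w)) \<le> C0 * exp (C0 * norm (exp w) powr \<rho>0)"
      using growth by blast
    then have "norm (f 1) * exp (Re (G w)) \<le> C0 * exp (C0 * exp (\<rho>0 * Re w))"
      using log[OF w] by (simp add: norm_mult exp_powr_real mult.commute)
    then have "ln (norm (f 1) * exp (Re (G w))) \<le> ln (C0 * exp (C0 * exp (\<rho>0 * Re w)))"
      using \<open>f 1 \<noteq> 0\<close> \<open>0 < C0\<close> by (subst ln_le_cancel_iff) auto
    then have "ln (norm (f 1)) + Re (G w) \<le> ln C0 + C0 * exp (\<rho>0 * Re w)"
      using \<open>f 1 \<noteq> 0\<close> \<open>0 < C0\<close> by (simp add: ln_mult)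
    moreover have le_abs: "x \<le> \<bar>x\<bar> * e" for x
      using mult_left_mono[OF \<open>1 \<le> e\<close> abs_ge_zero[of x]] by linarith
    moreover have "- ln (norm (f 1)) \<le> \<bar>ln (norm (f 1))\<bar> * e"
      using le_abs[of "- ln (norm (f 1))"] by simp
    moreover have "C0 * exp (\<rho>0 * Re w) \<le> C0 * e"
      using exp_\<rho>0 \<open>0 < C0\<close> by simp
    ultimately have "Re (G w) \<le> \<bar>ln C0\<bar> * e + C0 * e + \<bar>ln (norm (f 1))\<bar> * e"
      using le_abs[of "ln C0"] by linarith
    then show ?thesis
      by (simp add: D_def e_def algebra_simps)
  qed
  then show ?thesis by blast
qed

lemma half_strip_log_of_nonvanishing:
  fixes f :: "complex \<Rightarrow> complex"
  assumes U: "open U" "Omega \<subseteq> U" "f holomorphic_on U" and nonzero: "\<forall>z\<in>Omega. f z \<noteq> 0"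
  obtains G where
    "\<And>w. w \<in> half_strip \<Longrightarrow>
      (G has_field_derivative deriv f (exp w) * exp w / f (exp w)) (at w within half_strip)"
    and "G 0 = 0" and "\<And>w. w \<in> half_strip \<Longrightarrow> f (exp w) = f 1 * exp (G w)"
proof -
  have sub: "half_strip \<subseteq> exp -` U"
    using exp_image_half_strip U(2) by blast
  have open_pre: "open (exp -` U)"
    using U(1) by (intro open_vimage continuous_intros)
  have hol: "(\<lambda>w. f (exp w)) holomorphic_on exp -` U"
    using holomorphic_on_compose_gen[OF holomorphic_on_exp U(3)] by (auto simp: o_def)
  have nonzero': "\<And>w. w \<in> half_strip \<Longrightarrow> f (exp w) \<noteq> 0"
    using nonzero exp_image_half_strip by blast
  have "0 \<in> half_strip"
    by (simp add: half_strip_def)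
  obtain G where
    G: "\<And>w. w \<in> half_strip \<Longrightarrow>
      (G has_field_derivative deriv (\<lambda>w. f (exp w)) w / f (exp w)) (at w within half_strip)"
    and "G 0 = 0" and log: "\<And>w. w \<in> half_strip \<Longrightarrow> f (exp w) = f (exp 0) * exp (G w)"
    using convex_holomorphic_log[OF convex_half_strip \<open>0 \<in> half_strip\<close> open_pre sub hol nonzero']
    by blast
  have deriv_eq: "deriv (\<lambda>w. f (exp w)) w = deriv f (exp w) * exp w" if "w \<in> half_strip" for w
    using holomorphic_derivI[OF U(3,1)] sub that
    by (intro DERIV_imp_deriv DERIV_chain2[OF _ DERIV_exp]) auto
  show ?thesis
  proof (rule that)
    show "(G has_field_derivative deriv f (exp w) * exp w / f (exp w)) (at w within half_strip)"
      if "w \<in> half_strip" for w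
      using G[OF that] deriv_eq[OF that] by simp
    show "f (exp w) = f 1 * exp (G w)" if "w \<in> half_strip" for w
      using log[OF that] by simp
  qed fact
qed

lemma norm_le_exp_powr_of_log_bound:
  fixes f G :: "complex \<Rightarrow> complex" and B \<rho> :: real
  assumes log: "\<And>w. w \<in> half_strip \<Longrightarrow> f (exp w) = f 1 * exp (G w)"
    and B: "\<And>w. w \<in> half_strip \<Longrightarrow> norm (G w) \<le> B * exp (\<rho> * Re w)"
    and z: "z \<in> Omega"
  shows "norm (f z) \<le> (norm (f 1) + \<bar>B\<bar>) * exp ((norm (f 1) + \<bar>B\<bar>) * norm z powr \<rho>)"
proof -
  obtain w where w: "w \<in> half_strip" "z = exp w"
    using z exp_image_half_strip by blast
  have "Re (G w) \<le> norm (G w)"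
    by (rule complex_Re_le_cmod)
  also have "\<dots> \<le> B * exp (\<rho> * Re w)"
    using B[OF w(1)] .
  also have "\<dots> \<le> \<bar>B\<bar> * norm z powr \<rho>"
    using w(2) by (simp add: exp_powr_real mult.commute mult_right_mono)
  finally have "exp (Re (G w)) \<le> exp (\<bar>B\<bar> * norm z powr \<rho>)"
    by simp
  then have "norm (f z) \<le> norm (f 1) * exp (\<bar>B\<bar> * norm z powr \<rho>)"
    using log[OF w(1)] w(2) by (simp add: norm_mult mult_left_mono)
  also have "\<dots> \<le> (norm (f 1) + \<bar>B\<bar>) * exp ((norm (f 1) + \<bar>B\<bar>) * norm z powr \<rho>)"
    by (intro mult_mono) (auto intro: mult_right_mono)
  finally show ?thesis .
qed

theorem lemma2p2:
  fixes f :: "complex \<Rightarrow> complex" and \<rho>0 C0 C1 \<rho> :: real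
  assumes analytic: "\<exists>U. open U \<and> Omega \<subseteq> U \<and> f holomorphic_on U"
    and growth: "\<forall>z\<in>Omega. norm (f z) \<le> C0 * exp (C0 * norm z powr \<rho>0)"
    and rho_pos: "\<rho> > 0"
    and right: "\<forall>x::real. x > 1 \<longrightarrow>
        norm (integral {1..x} (\<lambda>t. deriv f (complex_of_real t) / f (complex_of_real t)))
          \<le> C1 * \<bar>x\<bar> powr \<rho>"
    and left: "\<forall>x::real. x < -1 \<longrightarrow>
        norm (integral {x..-1} (\<lambda>t. deriv f (complex_of_real t) / f (complex_of_real t)))
          \<le> C1 * \<bar>x\<bar> powr \<rho>"
    and nonzero: "\<forall>z\<in>Omega. f z \<noteq> 0"
  shows "\<exists>C3. \<forall>z\<in>Omega. norm (f z) \<le> C3 * exp (C3 * norm z powr \<rho>)"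
proof -
  obtain U where U: "open U" "Omega \<subseteq> U" "f holomorphic_on U"
    using analytic by blast
  obtain G where G: "\<And>w. w \<in> half_strip \<Longrightarrow>
      (G has_field_derivative deriv f (exp w) * exp w / f (exp w)) (at w within half_strip)"
    and "G 0 = 0" and log: "\<And>w. w \<in> half_strip \<Longrightarrow> f (exp w) = f 1 * exp (G w)"
    using half_strip_log_of_nonvanishing[OF U nonzero] by blast
  have "f 1 \<noteq> 0"
    using nonzero by (simp add: Omega_def)
  obtain D where "\<And>w. w \<in> half_strip \<Longrightarrow> Re (G w) \<le> D * exp (\<bar>\<rho>0\<bar> * Re w)"
    using Re_log_le_of_growth[OF growth log \<open>f 1 \<noteq> 0\<close>] by blast
  moreover obtain K where
    "\<And>w. w \<in> half_strip \<Longrightarrow> Im w = 0 \<or> Im w = pi \<Longrightarrow> norm (G w) \<le> K * exp (\<rho> * Re w)"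
    using half_strip_sides_bound_of_log_deriv_integrals[OF G \<open>G 0 = 0\<close> less_imp_le[OF rho_pos]
        right[rule_format] left[rule_format]]
    by blast
  ultimately have "\<exists>B. \<forall>w\<in>half_strip. norm (G w) \<le> B * exp (\<rho> * Re w)"
    using half_strip_exponential_type[where a = "\<bar>\<rho>0\<bar>" and \<rho> = \<rho> and D = D and K = K,
        OF DERIV_continuous_on[OF G] holomorphic_on_interior_of_has_field_derivative[OF G]] rho_pos
    by auto
  then obtain B where "\<And>w. w \<in> half_strip \<Longrightarrow> norm (G w) \<le> B * exp (\<rho> * Re w)"
    by blast
  then have "\<forall>z\<in>Omega. norm (f z) \<le> (norm (f 1) + \<bar>B\<bar>) * exp ((norm (f 1) + \<bar>B\<bar>) * norm z powr \<rho>)"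
    using norm_le_exp_powr_of_log_bound[OF log] by blast
  then show ?thesis
    by blast
qed

end
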